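(* The polycyclic monoid on two generators, $P_2=\mathrm{Mon}^0\langle p,q,p^{-1},q^{-1}\mid pp^{-1}=1=qq^{-1},\ pq^{-1}=0=qp^{-1}\rangle$ (monoid with zero), is neither left fairly amenable nor right fairly amenable.
   Context: $\mathrm{Mon}^0\langle\cdot\mid\cdot\rangle$ denotes the monoid with zero $0$ given by the presentation. For a semigroup $U$, $s\in U$, $A\subseteq U$: $s$ acts injectively on the left (right) of $A$ if $x\mapsto sx$ ($x\mapsto xs$) is injective on $A$. A finitely-additive probability measure on $U$ is $\mu:\mathcal P(U)\to[0,1]$ with $\mu(U)=1$, additive on disjoint sets; it is left fairly invariant if $\mu(sA)=\mu(A)$ whenever $s$ acts injectively on the left of $A$ (right fairly invariant analogously with $As$). $U$ is left (right) fairly amenable if such a measure exists. *)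

theory Defs
  imports Complex_Main "HOL-Library.Sublist"
begin

definition fa_prob_measure :: "('a set \<Rightarrow> real) \<Rightarrow> bool" where
  "fa_prob_measure \<mu> \<longleftrightarrow>
     (\<forall>A. 0 \<le> \<mu> A \<and> \<mu> A \<le> 1) \<and> \<mu> UNIV = 1 \<and>
     (\<forall>A B. A \<inter> B = {} \<longrightarrow> \<mu> (A \<union> B) = \<mu> A + \<mu> B)"

definition left_fairly_amenable :: "('a \<Rightarrow> 'a \<Rightarrow> 'a) \<Rightarrow> bool" where
  "left_fairly_amenable f \<longleftrightarrow>
     (\<exists>\<mu>. fa_prob_measure \<mu> \<and>
        (\<forall>s A. inj_on (\<lambda>x. f s x) A \<longrightarrow> \<mu> ((\<lambda>x. f s x) ` A) = \<mu> A))"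

definition right_fairly_amenable :: "('a \<Rightarrow> 'a \<Rightarrow> 'a) \<Rightarrow> bool" where
  "right_fairly_amenable f \<longleftrightarrow>
     (\<exists>\<mu>. fa_prob_measure \<mu> \<and>
        (\<forall>s A. inj_on (\<lambda>x. f x s) A \<longrightarrow> \<mu> ((\<lambda>x. f x s) ` A) = \<mu> A))"

text \<open>Generators p, q are encoded
  as True, False.  For words x = x1...xn, y over {p,q}, the element
  Some (x, y) represents x^{-1} y  (where x^{-1} = xn^{-1} ... x1^{-1}),
  and None is the zero.  This is the standard normal form: in P_2 every nonzero
  element is uniquely of the form x^{-1} y.  Multiplication:
  x^{-1} y * u^{-1} v = x^{-1} z v if y = z u;  (z x)^{-1} v if u = z y;  0 otherwise.\<close>

type_synonym P2 = "(bool list \<times> bool list) option"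

fun P2_mult :: "P2 \<Rightarrow> P2 \<Rightarrow> P2" where
  "P2_mult None _ = None"
| "P2_mult _ None = None"
| "P2_mult (Some (x, y)) (Some (u, v)) =
     (if suffix u y then Some (x, take (length y - length u) y @ v)
      else if suffix y u then Some (take (length u - length y) u @ x, v)
      else None)"

definition P2_one :: P2 where "P2_one = Some ([], [])"
definition P2_zero :: P2 where "P2_zero = None"
definition P2_p :: P2 where "P2_p = Some ([], [True])"
definition P2_q :: P2 where "P2_q = Some ([], [False])"
definition P2_pinv :: P2 where "P2_pinv = Some ([True], [])"
definition P2_qinv :: P2 where "P2_qinv = Some ([False], [])"

end

theory Submission
  imports Defs
begin

text \<open>Left translation by the zero maps any singleton injectively onto the singleton of the
  zero, so a fairly invariant measure gives the zero the same mass as the identity.  On the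
  other hand the left translations by \<open>p\<^sup>-\<^sup>1\<close> and \<open>q\<^sup>-\<^sup>1\<close> map the nonzero elements
  injectively onto two disjoint subsets of themselves, so the nonzero elements are null, and the
  whole mass sits on the zero.  Right translations by \<open>p\<close> and \<open>q\<close> play the same role on the
  other side.\<close>

lemma fa_prob_measure_nonneg: "fa_prob_measure \<mu> \<Longrightarrow> 0 \<le> \<mu> A"
  unfolding fa_prob_measure_def by blast

lemma fa_prob_measure_UNIV: "fa_prob_measure \<mu> \<Longrightarrow> \<mu> UNIV = 1"
  unfolding fa_prob_measure_def by blast

lemma fa_prob_measure_Un: "fa_prob_measure \<mu> \<Longrightarrow> A \<inter> B = {} \<Longrightarrow> \<mu> (A \<union> B) = \<mu> A + \<mu> B"
  unfolding fa_prob_measure_def by blast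

lemma fa_prob_measure_mono:
  assumes "fa_prob_measure \<mu>" "B \<subseteq> A"
  shows "\<mu> B \<le> \<mu> A"
proof -
  have "A = B \<union> (A - B)" using assms(2) by blast
  then have "\<mu> A = \<mu> B + \<mu> (A - B)"
    using fa_prob_measure_Un[OF assms(1), of B "A - B"] by simp
  with fa_prob_measure_nonneg[OF assms(1), of "A - B"] show ?thesis by linarith
qed

lemma fa_prob_measure_null_if_paradoxical:
  assumes "fa_prob_measure \<mu>" "G \<subseteq> X" "H \<subseteq> X" "G \<inter> H = {}" "\<mu> G = \<mu> X" "\<mu> H = \<mu> X"
  shows "\<mu> X = 0"
proof -
  have "\<mu> G + \<mu> H = \<mu> (G \<union> H)"
    using fa_prob_measure_Un[OF assms(1,4)] by simp
  also have "\<dots> \<le> \<mu> X"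
    using assms(2,3) by (intro fa_prob_measure_mono[OF assms(1)] Un_least)
  finally show ?thesis
    using fa_prob_measure_nonneg[OF assms(1), of X] assms(5,6) by linarith
qed

lemma fa_prob_measure_singleton_eq_1:
  assumes "fa_prob_measure \<mu>" "\<mu> (- {z}) = 0"
  shows "\<mu> {z} = 1"
proof -
  have "UNIV = - {z} \<union> {z}" by blast
  then show ?thesis
    using fa_prob_measure_Un[OF assms(1), of "- {z}" "{z}"] fa_prob_measure_UNIV[OF assms(1)]
      assms(2)
    by simp
qed

lemma not_left_fairly_amenable_if_paradoxical_zero:
  assumes zero: "\<And>x. f z x = z" and "a \<noteq> z"
    and inj: "inj_on (f s) (- {z})" "inj_on (f t) (- {z})"
    and into: "f s ` (- {z}) \<subseteq> - {z}" "f t ` (- {z}) \<subseteq> - {z}"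
    and disjoint: "f s ` (- {z}) \<inter> f t ` (- {z}) = {}"
  shows "\<not> left_fairly_amenable f"
proof
  assume "left_fairly_amenable f"
  then obtain \<mu> where \<mu>: "fa_prob_measure \<mu>"
    and invariant: "\<And>s A. inj_on (f s) A \<Longrightarrow> \<mu> (f s ` A) = \<mu> A"
    unfolding left_fairly_amenable_def by blast
  have "\<mu> (- {z}) = 0"
    using fa_prob_measure_null_if_paradoxical[OF \<mu> into disjoint
        invariant[OF inj(1)] invariant[OF inj(2)]] .
  then have "\<mu> {z} = 1"
    by (rule fa_prob_measure_singleton_eq_1[OF \<mu>])
  moreover have "\<mu> {z} = \<mu> {a}"
    using invariant[of z "{a}"] zero by simp
  moreover have "\<mu> {a} \<le> \<mu> (- {z})"
    using \<open>a \<noteq> z\<close> by (intro fa_prob_measure_mono[OF \<mu>]) blast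
  ultimately show False
    using \<open>\<mu> (- {z}) = 0\<close> by linarith
qed

lemma right_fairly_amenable_iff_left_flip:
  "right_fairly_amenable f \<longleftrightarrow> left_fairly_amenable (\<lambda>x y. f y x)"
  unfolding right_fairly_amenable_def left_fairly_amenable_def ..

lemma P2_mult_zero_left: "P2_mult None x = None"
  by simp

lemma P2_mult_zero_right: "P2_mult x None = None"
  by (cases x) auto

lemma P2_mult_inverse_generator_left:
  "P2_mult (Some ([b], [])) (Some (u, v)) = Some (u @ [b], v)"
  by (cases u) auto

lemma P2_mult_generator_right:
  "P2_mult (Some (u, v)) (Some ([], [b])) = Some (u, v @ [b])"
  by simp

lemma P2_nonzero_cases: "x \<in> - {None} \<Longrightarrow> (\<And>u v. x = Some (u, v) \<Longrightarrow> P) \<Longrightarrow> P"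
  by (cases x) auto

lemma inj_on_P2_mult_inverse_generator_left:
  "inj_on (P2_mult (Some ([b], []))) (- {None})"
proof (rule inj_onI)
  fix x y :: P2
  assume "x \<in> - {None}" "y \<in> - {None}" "P2_mult (Some ([b], [])) x = P2_mult (Some ([b], [])) y"
  then show "x = y"
    by (elim P2_nonzero_cases) (simp only: P2_mult_inverse_generator_left, simp)
qed

lemma inj_on_P2_mult_generator_right:
  "inj_on (\<lambda>x. P2_mult x (Some ([], [b]))) (- {None})"
proof (rule inj_onI)
  fix x y :: P2
  assume "x \<in> - {None}" "y \<in> - {None}" "P2_mult x (Some ([], [b])) = P2_mult y (Some ([], [b]))"
  then show "x = y"
    by (elim P2_nonzero_cases) simp
qed

lemma P2_mult_inverse_generator_left_image_subset:
  "P2_mult (Some ([b], [])) ` (- {None}) \<subseteq> {Some (u @ [b], v) | u v. True}"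
proof
  fix y assume "y \<in> P2_mult (Some ([b], [])) ` (- {None})"
  then obtain x where "x \<in> - {None}" "y = P2_mult (Some ([b], [])) x" by blast
  then show "y \<in> {Some (u @ [b], v) | u v. True}"
    by (elim P2_nonzero_cases) (simp only: P2_mult_inverse_generator_left, blast)
qed

lemma P2_mult_generator_right_image_subset:
  "(\<lambda>x. P2_mult x (Some ([], [b]))) ` (- {None}) \<subseteq> {Some (u, v @ [b]) | u v. True}"
  by (auto elim!: P2_nonzero_cases)

lemma P2_mult_inverse_generator_left_image_nonzero:
  "P2_mult (Some ([b], [])) ` (- {None}) \<subseteq> - {None}"
  using P2_mult_inverse_generator_left_image_subset by (rule subset_trans) blast

lemma P2_mult_generator_right_image_nonzero:
  "(\<lambda>x. P2_mult x (Some ([], [b]))) ` (- {None}) \<subseteq> - {None}"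
  using P2_mult_generator_right_image_subset by (rule subset_trans) blast

lemma P2_mult_inverse_generators_left_images_disjoint:
  "P2_mult (Some ([True], [])) ` (- {None}) \<inter> P2_mult (Some ([False], [])) ` (- {None}) = {}"
proof -
  have "P2_mult (Some ([True], [])) ` (- {None}) \<inter> P2_mult (Some ([False], [])) ` (- {None})
      \<subseteq> {Some (u @ [True], v) | u v. True} \<inter> {Some (u @ [False], v) | u v. True}"
    by (intro Int_mono P2_mult_inverse_generator_left_image_subset)
  also have "\<dots> = {}"
    by blast
  finally show ?thesis
    by (rule subset_empty[THEN iffD1])
qed

lemma P2_mult_generators_right_images_disjoint:
  "(\<lambda>x. P2_mult x (Some ([], [True]))) ` (- {None}) \<inter>
    (\<lambda>x. P2_mult x (Some ([], [False]))) ` (- {None}) = {}"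
proof -
  have "(\<lambda>x. P2_mult x (Some ([], [True]))) ` (- {None}) \<inter>
      (\<lambda>x. P2_mult x (Some ([], [False]))) ` (- {None})
      \<subseteq> {Some (u, v @ [True]) | u v. True} \<inter> {Some (u, v @ [False]) | u v. True}"
    by (intro Int_mono P2_mult_generator_right_image_subset)
  also have "\<dots> = {}"
    by blast
  finally show ?thesis
    by (rule subset_empty[THEN iffD1])
qed

theorem mainTheorem20:
  shows "\<not> left_fairly_amenable P2_mult \<and> \<not> right_fairly_amenable P2_mult"
proof
  show "\<not> left_fairly_amenable P2_mult"
    by (rule not_left_fairly_amenable_if_paradoxical_zero[where a = P2_one, OF P2_mult_zero_left _
          inj_on_P2_mult_inverse_generator_left inj_on_P2_mult_inverse_generator_left
          P2_mult_inverse_generator_left_image_nonzero P2_mult_inverse_generator_left_image_nonzero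
          P2_mult_inverse_generators_left_images_disjoint])
      (simp add: P2_one_def)
  show "\<not> right_fairly_amenable P2_mult"
    unfolding right_fairly_amenable_iff_left_flip
    by (rule not_left_fairly_amenable_if_paradoxical_zero[where a = P2_one, OF P2_mult_zero_right _
          inj_on_P2_mult_generator_right inj_on_P2_mult_generator_right
          P2_mult_generator_right_image_nonzero P2_mult_generator_right_image_nonzero
          P2_mult_generators_right_images_disjoint])
      (simp add: P2_one_def)
qed

end
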